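(* Let $1\le k\le m$ and let $\phi_{m,k}$ be the automorphism of the free group $F(A_1,\dots,A_m,B_1,\dots,B_k)$ described below. Then the largest Jordan block in the Jordan normal form of each of the induced automorphisms $\phi_{m,k}^{ab}$ and $(\phi_{m,k}^{-1})^{ab}$ of $\mathbb Z^{m+k}$ has size $k+1$.
   Context: $\phi_{m,k}(A_i)=A_1\cdots A_{i-1}A_iA_{i-1}^{-1}\cdots A_1^{-1}$ for $1\le i\le m$, and $\phi_{m,k}(B_j)=A_1\cdots A_m(B_1\cdots B_j)A_{j-1}^{-1}\cdots A_1^{-1}$ for $1\le j\le k$. $\psi^{ab}$ denotes the automorphism induced on the abelianization, viewed as a matrix in $GL(m+k,\mathbb C)$. *)

theory Defs
  imports "Jordan_Normal_Form.Jordan_Normal_Form"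
begin

text \<open>Generators of the free group F(A_1,...,A_m,B_1,...,B_k).
  A word is a list of letters (g, True) = g and (g, False) = g^{-1}.\<close>

datatype gen = GA nat | GB nat

type_synonym word = "(gen \<times> bool) list"

definition inv_word :: "word \<Rightarrow> word" where
  "inv_word w = rev (map (\<lambda>(g,s). (g, \<not> s)) w)"

text \<open>The automorphism phi_{m,k} on generators (1-based indices).\<close>
fun phi :: "nat \<Rightarrow> nat \<Rightarrow> gen \<Rightarrow> word" where
  "phi m k (GA i) =
     map (\<lambda>l. (GA l, True)) [1..<i] @ [(GA i, True)]
     @ inv_word (map (\<lambda>l. (GA l, True)) [1..<i])"
| "phi m k (GB j) =
     map (\<lambda>l. (GA l, True)) [1..<m+1] @ map (\<lambda>l. (GB l, True)) [1..<j+1]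
     @ inv_word (map (\<lambda>l. (GA l, True)) [1..<j])"

definition exp_sum :: "word \<Rightarrow> gen \<Rightarrow> int" where
  "exp_sum w g = sum_list (map (\<lambda>(h,s). if h = g then (if s then 1 else -1) else 0) w)"

definition gen_of :: "nat \<Rightarrow> nat \<Rightarrow> gen" where
  "gen_of m c = (if c < m then GA (c+1) else GB (c - m + 1))"

definition phi_ab :: "nat \<Rightarrow> nat \<Rightarrow> complex mat" where
  "phi_ab m k = mat (m+k) (m+k)
     (\<lambda>(r,c). of_int (exp_sum (phi m k (gen_of m c)) (gen_of m r)))"

definition max_block :: "(nat \<times> complex) list \<Rightarrow> nat" where
  "max_block n_as = Max (fst ` set n_as)"

end

theory Submission
  imports Defs "Jordan_Normal_Form.Jordan_Normal_Form_Uniqueness"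
begin

text \<open>The abelianization \<open>M\<close> of \<open>\<phi>\<^sub>m\<^sub>,\<^sub>k\<close> fixes every \<open>A\<^sub>i\<close> and sends \<open>B\<^sub>j\<close> to
  \<open>A\<^sub>j + \<dots> + A\<^sub>m + B\<^sub>1 + \<dots> + B\<^sub>j\<close>. Put the \<open>A\<^sub>i\<close> in level 0 and \<open>B\<^sub>j\<close> in level \<open>j\<close>:
  then \<open>M - 1\<close> strictly raises the level, so \<open>(M - 1)\<^sup>k\<^sup>+\<^sup>1 = 0\<close>, while the chain
  \<open>B\<^sub>k \<mapsto> B\<^sub>k\<^sub>-\<^sub>1 \<mapsto> \<dots> \<mapsto> B\<^sub>1 \<mapsto> A\<^sub>1\<close> of coefficients shows \<open>(M - 1)\<^sup>k \<noteq> 0\<close>.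
  In Jordan normal form, \<open>(M - 1)\<^sup>p = 0\<close> holds iff every block has eigenvalue 1 and size at
  most \<open>p\<close>, so the largest block has size exactly \<open>k + 1\<close>. Finally
  \<open>M\<^sup>-\<^sup>1 - 1 = (M - 1) (-M\<^sup>-\<^sup>1)\<close> with commuting factors, so \<open>M\<^sup>-\<^sup>1 - 1\<close> has the same nilpotency
  index as \<open>M - 1\<close>.\<close>

lemma index_mult_mat_sum:
  assumes "A \<in> carrier_mat nr n" and "B \<in> carrier_mat n nc" and "i < nr" and "j < nc"
  shows "(A * B) $$ (i,j) = (\<Sum>l = 0..<n. A $$ (i,l) * B $$ (l,j))"
  using assms by (simp add: scalar_prod_def)

lemma pow_mat_index_eq_0_if_graded:
  fixes E :: "'a :: semiring_1 mat"
  assumes E: "E \<in> carrier_mat n n"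
    and graded: "\<And>i j. i < n \<Longrightarrow> j < n \<Longrightarrow> E $$ (i,j) \<noteq> 0 \<Longrightarrow> lv i < lv j"
    and "r < n" and "c < n" and "lv c < lv r + q"
  shows "(E ^\<^sub>m q) $$ (r,c) = 0"
  using \<open>c < n\<close> \<open>lv c < lv r + q\<close>
proof (induction q arbitrary: c)
  case 0
  then show ?case using E \<open>r < n\<close> by auto
next
  case (Suc q)
  have "(E ^\<^sub>m Suc q) $$ (r,c) = (\<Sum>l = 0..<n. (E ^\<^sub>m q) $$ (r,l) * E $$ (l,c))"
    unfolding pow_mat.simps(2) by (rule index_mult_mat_sum) (use E \<open>r < n\<close> Suc.prems in auto)
  also have "\<dots> = 0"
  proof (rule sum.neutral, intro ballI)
    fix l assume l: "l \<in> {0..<n}"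
    show "(E ^\<^sub>m q) $$ (r,l) * E $$ (l,c) = 0"
    proof (cases "E $$ (l,c) = 0")
      case False
      then have "lv l < lv c" using graded l Suc.prems by auto
      then show ?thesis using Suc.IH[of l] Suc.prems l by simp
    qed simp
  qed
  finally show ?case .
qed

lemma char_matrix_one_eq_minus_one_mat:
  "A \<in> carrier_mat n n \<Longrightarrow> char_matrix A 1 = A - 1\<^sub>m n"
  unfolding char_matrix_def by (intro eq_matI) auto

lemma pow_mat_mult_commute:
  fixes A B :: "'a :: semiring_1 mat"
  assumes A: "A \<in> carrier_mat n n" and B: "B \<in> carrier_mat n n" and comm: "A * B = B * A"
  shows "(A * B) ^\<^sub>m q = A ^\<^sub>m q * B ^\<^sub>m q"
proof -
  interpret R: semiring "ring_mat TYPE('a) n ()" by (rule semiring_mat)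
  have AB: "A * B \<in> carrier_mat n n" using A B by simp
  show ?thesis
    using R.pow_mult_distrib[of A B q, unfolded ring_mat_simps, OF comm A B]
    unfolding pow_mat_ring_pow[OF A, where b = "()"] pow_mat_ring_pow[OF B, where b = "()"]
      pow_mat_ring_pow[OF AB, where b = "()"] .
qed

lemma char_matrix_inverse_pow_eq_0:
  fixes X Y :: "'a :: field mat"
  assumes X: "X \<in> carrier_mat n n" and Y: "Y \<in> carrier_mat n n"
    and XY: "X * Y = 1\<^sub>m n" and YX: "Y * X = 1\<^sub>m n"
    and nil: "char_matrix X 1 ^\<^sub>m q = 0\<^sub>m n n"
  shows "char_matrix Y 1 ^\<^sub>m q = 0\<^sub>m n n"
proof -
  have E: "X - 1\<^sub>m n \<in> carrier_mat n n" and C: "- Y \<in> carrier_mat n n"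
    using X Y by auto
  have "(X - 1\<^sub>m n) * Y = 1\<^sub>m n - Y" and "Y * (X - 1\<^sub>m n) = 1\<^sub>m n - Y"
    using X Y by (simp_all add: minus_mult_distrib_mat[OF X _ Y] mult_minus_distrib_mat[OF Y X] XY YX)
  then have YE: "char_matrix Y 1 = (X - 1\<^sub>m n) * - Y"
    and comm: "(X - 1\<^sub>m n) * - Y = - Y * (X - 1\<^sub>m n)"
    using X Y by (auto simp: char_matrix_one_eq_minus_one_mat)
  have "char_matrix Y 1 ^\<^sub>m q = (X - 1\<^sub>m n) ^\<^sub>m q * (- Y) ^\<^sub>m q"
    unfolding YE by (rule pow_mat_mult_commute[OF E C comm])
  also have "\<dots> = 0\<^sub>m n n"
    using nil X C by (simp add: char_matrix_one_eq_minus_one_mat)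
  finally show ?thesis .
qed

lemma four_block_diag_mat_eq_0_iff:
  "four_block_mat A (0\<^sub>m (dim_row A) (dim_col D)) (0\<^sub>m (dim_row D) (dim_col A)) D
     = 0\<^sub>m (dim_row A + dim_row D) (dim_col A + dim_col D)
   \<longleftrightarrow> A = 0\<^sub>m (dim_row A) (dim_col A) \<and> D = 0\<^sub>m (dim_row D) (dim_col D)"
  (is "?F = _ \<longleftrightarrow> _")
proof
  assume F: "?F = 0\<^sub>m (dim_row A + dim_row D) (dim_col A + dim_col D)"
  have "A $$ (i,j) = 0" if "i < dim_row A" "j < dim_col A" for i j
    using arg_cong[OF F, of "\<lambda>M. M $$ (i,j)"] that by simp
  moreover have "D $$ (i,j) = 0" if "i < dim_row D" "j < dim_col D" for i j
    using arg_cong[OF F, of "\<lambda>M. M $$ (dim_row A + i, dim_col A + j)"] that by simp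
  ultimately show "A = 0\<^sub>m (dim_row A) (dim_col A) \<and> D = 0\<^sub>m (dim_row D) (dim_col D)"
    by (intro conjI eq_matI) auto
qed (metis four_block_zero_mat)

lemma diag_block_mat_eq_0_iff:
  "diag_block_mat As = 0\<^sub>m (sum_list (map dim_row As)) (sum_list (map dim_col As))
   \<longleftrightarrow> (\<forall>A \<in> set As. A = 0\<^sub>m (dim_row A) (dim_col A))"
proof (induction As)
  case (Cons A As)
  then show ?case
    using four_block_diag_mat_eq_0_iff[of A "diag_block_mat As"]
    by (simp add: Let_def dim_diag_block_mat add.assoc)
qed simp

lemma jordan_block_pow_eq_0_iff:
  assumes "0 < n"
  shows "jordan_block n (a :: 'a :: field) ^\<^sub>m r = 0\<^sub>m n n \<longleftrightarrow> a = 0 \<and> n \<le> r"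
proof
  assume J: "jordan_block n a ^\<^sub>m r = 0\<^sub>m n n"
  have "a ^ r = 0"
    using arg_cong[OF J, of "\<lambda>M. M $$ (0,0)"] assms by (simp add: jordan_block_pow)
  then have "a = 0" by simp
  moreover have "n \<le> r"
  proof (rule ccontr)
    assume "\<not> n \<le> r"
    then show False
      using arg_cong[OF J, of "\<lambda>M. M $$ (0,r)"] \<open>a = 0\<close> by (simp add: jordan_block_zero_pow)
  qed
  ultimately show "a = 0 \<and> n \<le> r" ..
next
  assume "a = 0 \<and> n \<le> r"
  then show "jordan_block n a ^\<^sub>m r = 0\<^sub>m n n"
    by (intro eq_matI) (auto simp: jordan_block_zero_pow)
qed

lemma char_matrix_jordan_matrix:
  "char_matrix (jordan_matrix n_as) e = jordan_matrix (map (\<lambda>(n,a). (n, a - e)) n_as)"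
proof (induction n_as)
  case Nil
  show ?case by (intro eq_matI) (auto simp: jordan_matrix_def char_matrix_def)
next
  case (Cons na n_as)
  obtain n a where na: "na = (n,a)" by force
  have "char_matrix (jordan_matrix (na # n_as)) e
      = four_block_mat (char_matrix (jordan_block n a) e) (0\<^sub>m n (sum_list (map fst n_as)))
          (0\<^sub>m (sum_list (map fst n_as)) n) (char_matrix (jordan_matrix n_as) e)"
    unfolding na jordan_matrix_Cons char_matrix_def by (intro eq_matI) auto
  then show ?case
    by (simp add: na Cons char_matrix_jordan_block jordan_matrix_Cons case_prod_beta o_def)
qed

lemma similar_mat_eq_0_iff:
  assumes "similar_mat A B" and "A \<in> carrier_mat n n"
  shows "A = 0\<^sub>m n n \<longleftrightarrow> B = 0\<^sub>m n n"
proof -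
  obtain P Q where wit: "similar_mat_wit A B P Q"
    using assms(1) unfolding similar_mat_def by blast
  have dim: "dim_row A = n" using assms(2) by simp
  from similar_mat_witD[OF dim[symmetric] wit] similar_mat_witD[OF _ similar_mat_wit_sym[OF wit]]
  show ?thesis by force
qed

lemma jordan_nf_char_matrix_pow_eq_0_iff:
  assumes A: "A \<in> carrier_mat n n" and jnf: "jordan_nf A n_as"
  shows "char_matrix A e ^\<^sub>m r = 0\<^sub>m n n \<longleftrightarrow> (\<forall>(b,a) \<in> set n_as. a = e \<and> b \<le> r)"
proof -
  obtain P Q where wit: "similar_mat_wit A (jordan_matrix n_as) P Q"
    using jnf unfolding jordan_nf_def similar_mat_def by blast
  have sim: "similar_mat (char_matrix A e ^\<^sub>m r) (jordan_matrix (map (\<lambda>(b,a). (b, a - e)) n_as) ^\<^sub>m r)"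
    using similar_mat_wit_pow[OF similar_mat_wit_char_matrix[OF wit]]
    unfolding similar_mat_def char_matrix_jordan_matrix by blast
  have n: "sum_list (map fst n_as) = n"
    using similar_mat_witD2[OF A wit] by (metis carrier_matD(1) jordan_matrix_dim(1))
  have pos: "0 < b" if "(b,a) \<in> set n_as" for b a
    using jnf that unfolding jordan_nf_def by force
  have "char_matrix A e ^\<^sub>m r = 0\<^sub>m n n
      \<longleftrightarrow> diag_block_mat (map (\<lambda>(b,a). jordan_block b (a - e) ^\<^sub>m r) n_as) = 0\<^sub>m n n"
    using similar_mat_eq_0_iff[OF sim] A
    by (simp add: jordan_matrix_pow o_def split_def)
  also have "\<dots> \<longleftrightarrow> (\<forall>(b,a) \<in> set n_as. jordan_block b (a - e) ^\<^sub>m r = 0\<^sub>m b b)"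
  proof -
    have dims: "map dim_row (map (\<lambda>(b,a). jordan_block b (a - e) ^\<^sub>m r) n_as) = map fst n_as"
      "map dim_col (map (\<lambda>(b,a). jordan_block b (a - e) ^\<^sub>m r) n_as) = map fst n_as"
      by (induction n_as) auto
    show ?thesis
      using diag_block_mat_eq_0_iff[of "map (\<lambda>(b,a). jordan_block b (a - e) ^\<^sub>m r) n_as"]
      unfolding dims n by (simp add: case_prod_beta del: pow_mat_dim)
  qed
  also have "\<dots> \<longleftrightarrow> (\<forall>(b,a) \<in> set n_as. a = e \<and> b \<le> r)"
  proof (intro ball_cong refl)
    fix x assume x: "x \<in> set n_as"
    obtain b a where [simp]: "x = (b,a)" by force
    show "(case x of (b,a) \<Rightarrow> jordan_block b (a - e) ^\<^sub>m r = 0\<^sub>m b b)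
        \<longleftrightarrow> (case x of (b,a) \<Rightarrow> a = e \<and> b \<le> r)"
      using jordan_block_pow_eq_0_iff[of b "a - e" r] pos x by simp
  qed
  finally show ?thesis .
qed

lemma jordan_nf_max_block_eq_nilpotency_index:
  assumes A: "A \<in> carrier_mat n n" and jnf: "jordan_nf A n_as" and "0 < p"
    and nil: "char_matrix A e ^\<^sub>m p = 0\<^sub>m n n"
    and not_nil: "char_matrix A e ^\<^sub>m (p - 1) \<noteq> 0\<^sub>m n n"
  shows "max_block n_as = p"
proof -
  note iff = jordan_nf_char_matrix_pow_eq_0_iff[OF A jnf]
  have le: "b \<le> p" if "(b,a) \<in> set n_as" for b a
    using nil that unfolding iff by auto
  obtain b a where mem: "(b,a) \<in> set n_as" and "\<not> (a = e \<and> b \<le> p - 1)"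
    using not_nil unfolding iff by auto
  with nil have "b = p"
    using \<open>0 < p\<close> unfolding iff by fastforce
  show ?thesis
    unfolding max_block_def
    by (rule Max_eqI) (use mem \<open>b = p\<close> le in force)+
qed

lemma exp_sum_append [simp]: "exp_sum (v @ w) g = exp_sum v g + exp_sum w g"
  unfolding exp_sum_def by simp

lemma exp_sum_inv_word [simp]: "exp_sum (inv_word w) g = - exp_sum w g"
  unfolding exp_sum_def inv_word_def by (induction w) (auto simp: rev_map[symmetric])

lemma exp_sum_map_upt:
  assumes "inj G"
  shows "exp_sum (map (\<lambda>l. (G l, True)) [a..<b]) g = of_bool (g \<in> G ` {a..<b})"
proof (induction b)
  case (Suc b)
  have "G b \<notin> G ` {a..<b}" using assms by (auto dest: injD)
  then show ?case
    using Suc by (cases "a \<le> b") (auto simp: exp_sum_def atLeastLessThanSuc)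
qed (simp add: exp_sum_def)

lemma exp_sum_single: "exp_sum [(h, True)] g = of_bool (h = g)"
  unfolding exp_sum_def by simp

lemma inj_GA: "inj GA" and inj_GB: "inj GB"
  by (auto intro: injI)

lemma exp_sum_phi_GA: "exp_sum (phi m k (GA i)) g = of_bool (g = GA i)"
  by (simp only: phi.simps exp_sum_append exp_sum_inv_word exp_sum_single
      exp_sum_map_upt[OF inj_GA]) auto

lemma exp_sum_phi_GB:
  assumes "1 \<le> j" and "j \<le> m + 1"
  shows "exp_sum (phi m k (GB j)) g = of_bool (g \<in> GA ` {j..m} \<union> GB ` {1..j})"
  by (simp only: phi.simps exp_sum_append exp_sum_inv_word
      exp_sum_map_upt[OF inj_GA] exp_sum_map_upt[OF inj_GB]) (use assms in \<open>cases g; auto simp: image_iff\<close>)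

lemma phi_ab_index:
  assumes "k \<le> m" and "r < m + k" and "c < m + k"
  shows "phi_ab m k $$ (r,c) = of_bool (if c < m then r = c else if r < m then c \<le> r + m else r \<le> c)"
proof -
  have "phi_ab m k $$ (r,c) = of_int (exp_sum (phi m k (gen_of m c)) (gen_of m r))"
    using assms by (simp add: phi_ab_def)
  also have "\<dots> = of_bool (if c < m then r = c else if r < m then c \<le> r + m else r \<le> c)"
  proof (cases "c < m")
    case True
    then show ?thesis by (auto simp: gen_of_def exp_sum_phi_GA simp del: phi.simps)
  next
    case False
    then have "gen_of m c = GB (c - m + 1)" by (simp add: gen_of_def)
    then show ?thesis
      using False assms by (auto simp: exp_sum_phi_GB gen_of_def simp del: phi.simps)
  qed
  finally show ?thesis .
qed

lemma phi_ab_carrier: "phi_ab m k \<in> carrier_mat (m + k) (m + k)"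
  by (simp add: phi_ab_def)

lemma char_matrix_phi_ab_index:
  assumes "k \<le> m" and "r < m + k" and "c < m + k"
  shows "char_matrix (phi_ab m k) 1 $$ (r,c) = of_bool (m \<le> c \<and> (if r < m then c \<le> r + m else r < c))"
  using assms phi_ab_carrier[of m k] by (auto simp: char_matrix_def phi_ab_index)

text \<open>\<open>Suc r - m\<close> is the level of the \<open>r\<close>-th generator: 0 for the \<open>A\<^sub>i\<close> by truncated
  subtraction, and \<open>j\<close> for \<open>B\<^sub>j\<close>.\<close>

lemma char_matrix_phi_ab_graded:
  assumes "k \<le> m" and "r < m + k" and "c < m + k"
    and "char_matrix (phi_ab m k) 1 $$ (r,c) \<noteq> 0"
  shows "Suc r - m < Suc c - m"
  using assms by (auto simp: char_matrix_phi_ab_index split: if_splits)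

lemma char_matrix_phi_ab_pow_index_eq_0:
  assumes "k \<le> m" and "r < m + k" and "c < m + k" and "Suc c - m < Suc r - m + q"
  shows "(char_matrix (phi_ab m k) 1 ^\<^sub>m q) $$ (r,c) = 0"
proof (rule pow_mat_index_eq_0_if_graded[where lv = "\<lambda>i. Suc i - m"])
  show "char_matrix (phi_ab m k) 1 \<in> carrier_mat (m + k) (m + k)"
    using phi_ab_carrier by simp
  show "\<And>i j. i < m + k \<Longrightarrow> j < m + k \<Longrightarrow> char_matrix (phi_ab m k) 1 $$ (i,j) \<noteq> 0
      \<Longrightarrow> Suc i - m < Suc j - m"
    by (rule char_matrix_phi_ab_graded[OF assms(1)])
qed (use assms in auto)

lemma char_matrix_phi_ab_pow_Suc_eq_0:
  assumes "k \<le> m"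
  shows "char_matrix (phi_ab m k) 1 ^\<^sub>m Suc k = 0\<^sub>m (m + k) (m + k)"
proof (rule eq_matI)
  fix r c assume "r < dim_row (0\<^sub>m (m + k) (m + k) :: complex mat)"
    and "c < dim_col (0\<^sub>m (m + k) (m + k) :: complex mat)"
  then show "(char_matrix (phi_ab m k) 1 ^\<^sub>m Suc k) $$ (r,c) = 0\<^sub>m (m + k) (m + k) $$ (r,c)"
    using char_matrix_phi_ab_pow_index_eq_0[OF assms, of r c "Suc k"] by (simp del: pow_mat.simps)
qed (use phi_ab_carrier in \<open>auto simp: char_matrix_def\<close>)

text \<open>Level \<open>q + 1\<close> consists of the single index \<open>m + q\<close>, so this entry of the power is
  carried by one path only.\<close>

lemma char_matrix_phi_ab_pow_index:
  assumes "k \<le> m" and "r < m" and "q < k"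
  shows "(char_matrix (phi_ab m k) 1 ^\<^sub>m Suc q) $$ (r, m + q) = 1"
  using \<open>q < k\<close>
proof (induction q)
  let ?E = "char_matrix (phi_ab m k) 1"
  have E: "?E \<in> carrier_mat (m + k) (m + k)" using phi_ab_carrier by simp
  {
    case 0
    have "?E ^\<^sub>m Suc 0 = ?E" using E by simp
    then show ?case
      unfolding add_0_right using assms 0 by (simp add: char_matrix_phi_ab_index)
  next
    case (Suc q)
    have vanish: "(?E ^\<^sub>m Suc q) $$ (r,l) * ?E $$ (l, m + Suc q) = 0"
      if "l < m + k" "l \<noteq> m + q" for l
    proof (cases "?E $$ (l, m + Suc q) = 0")
      case False
      then have "Suc l - m < Suc q"
        using that Suc.prems char_matrix_phi_ab_graded[OF assms(1), of l "m + Suc q"] by auto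
      then show ?thesis
        using char_matrix_phi_ab_pow_index_eq_0[OF assms(1), of r l "Suc q"] that assms
        by (simp del: pow_mat.simps)
    qed simp
    have "(?E ^\<^sub>m Suc (Suc q)) $$ (r, m + Suc q) = (?E ^\<^sub>m Suc q * ?E) $$ (r, m + Suc q)"
      by (simp only: pow_mat.simps(2))
    also have "\<dots> = (\<Sum>l = 0..<m + k. (?E ^\<^sub>m Suc q) $$ (r,l) * ?E $$ (l, m + Suc q))"
      by (rule index_mult_mat_sum[OF pow_carrier_mat[OF E] E]) (use assms Suc.prems in auto)
    also have "\<dots> = (?E ^\<^sub>m Suc q) $$ (r, m + q) * ?E $$ (m + q, m + Suc q)
        + (\<Sum>l \<in> {0..<m + k} - {m + q}. (?E ^\<^sub>m Suc q) $$ (r,l) * ?E $$ (l, m + Suc q))"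
      by (rule sum.remove) (use Suc.prems in auto)
    also have "(\<Sum>l \<in> {0..<m + k} - {m + q}. (?E ^\<^sub>m Suc q) $$ (r,l) * ?E $$ (l, m + Suc q)) = 0"
      using vanish by (intro sum.neutral) auto
    also have "(?E ^\<^sub>m Suc q) $$ (r, m + q) = 1"
      by (rule Suc.IH) (use Suc.prems in simp)
    also have "?E $$ (m + q, m + Suc q) = 1"
      using Suc.prems assms by (simp add: char_matrix_phi_ab_index)
    finally show ?case by (simp del: pow_mat.simps)
  }
qed

lemma char_matrix_phi_ab_pow_neq_0:
  assumes "1 \<le> k" and "k \<le> m"
  shows "char_matrix (phi_ab m k) 1 ^\<^sub>m k \<noteq> 0\<^sub>m (m + k) (m + k)"
proof
  assume "char_matrix (phi_ab m k) 1 ^\<^sub>m k = 0\<^sub>m (m + k) (m + k)"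
  moreover have "(char_matrix (phi_ab m k) 1 ^\<^sub>m k) $$ (0, m + (k - 1)) = 1"
    using char_matrix_phi_ab_pow_index[of k m 0 "k - 1"] assms by (simp del: pow_mat.simps)
  ultimately show False
    using assms by simp
qed

theorem claim8p13:
  fixes m k :: nat
  assumes "1 \<le> k" and "k \<le> m"
  shows "(\<forall>n_as. jordan_nf (phi_ab m k) n_as \<longrightarrow> max_block n_as = k + 1)
    \<and> (\<forall>N \<in> carrier_mat (m+k) (m+k). phi_ab m k * N = 1\<^sub>m (m+k) \<and> N * phi_ab m k = 1\<^sub>m (m+k) \<longrightarrow>
         (\<forall>n_as. jordan_nf N n_as \<longrightarrow> max_block n_as = k + 1))"
proof -
  have nil: "char_matrix (phi_ab m k) 1 ^\<^sub>m Suc k = 0\<^sub>m (m + k) (m + k)"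
    by (rule char_matrix_phi_ab_pow_Suc_eq_0[OF assms(2)])
  have not_nil: "char_matrix (phi_ab m k) 1 ^\<^sub>m k \<noteq> 0\<^sub>m (m + k) (m + k)"
    by (rule char_matrix_phi_ab_pow_neq_0[OF assms])
  have max_block: "max_block n_as = k + 1"
    if "A \<in> carrier_mat (m + k) (m + k)" and "jordan_nf A n_as"
      and "char_matrix A 1 ^\<^sub>m Suc k = 0\<^sub>m (m + k) (m + k)"
      and "char_matrix A 1 ^\<^sub>m k \<noteq> 0\<^sub>m (m + k) (m + k)" for A n_as
    using jordan_nf_max_block_eq_nilpotency_index[OF that(1,2) _ that(3)] that(4) by simp
  show ?thesis
  proof (intro conjI allI impI ballI)
    fix n_as assume "jordan_nf (phi_ab m k) n_as"
    then show "max_block n_as = k + 1"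
      using max_block phi_ab_carrier nil not_nil by blast
  next
    fix N n_as assume N: "N \<in> carrier_mat (m + k) (m + k)"
      and inv: "phi_ab m k * N = 1\<^sub>m (m + k) \<and> N * phi_ab m k = 1\<^sub>m (m + k)"
      and "jordan_nf N n_as"
    moreover have "char_matrix N 1 ^\<^sub>m Suc k = 0\<^sub>m (m + k) (m + k)"
      using char_matrix_inverse_pow_eq_0[OF phi_ab_carrier N] inv nil by blast
    moreover have "char_matrix N 1 ^\<^sub>m k \<noteq> 0\<^sub>m (m + k) (m + k)"
      using char_matrix_inverse_pow_eq_0[OF N phi_ab_carrier] inv not_nil by blast
    ultimately show "max_block n_as = k + 1"
      using max_block by blast
  qed
qed

end
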